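(* Let $0<r<1$. In the RRH with redirection parameter $r$, for every $N\ge 1$, $$\mathbb{E}[\mathcal{R}_2(N)]=\frac{1}{r}\left[\frac{\Gamma(N+r)}{\Gamma(1+r)\,\Gamma(N)}-1\right],$$ and consequently $\mathbb{E}[\mathcal{R}_2(N)]\sim \dfrac{N^r}{r\,\Gamma(1+r)}$ as $N\to\infty$.
   Context: The RRH with redirection parameter $r\in[0,1)$ is the following random hypergraph process. At size $N=1$ it has vertex set $\{v_1\}$ and edge set $\{\{v_1\}\}$. Given the hypergraph of size $N$ (vertices $v_1,\dots,v_N$, $N$ edges), choose an existing edge $e$ uniformly at random and add a new vertex $v_{N+1}$ and one new edge, as follows. If $e=\{v_1\}$, the new edge is $\{v_1,v_{N+1}\}$. Otherwise write $e=\{v_{i_1},\dots,v_{i_n}\}$ with $1=i_1<\dots<i_n$, $n\ge2$; independently, with probability $1-r$ the new edge is $e\cup\{v_{N+1}\}$ and with probability $r$ it is $\{v_{i_1},\dots,v_{i_{n-1}},v_{N+1}\}$. $\mathcal{R}_k(N)$ denotes the number of edges of size $k$ at size $N$. *)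

theory Defs
  imports "HOL-Probability.Probability" "HOL-Library.Landau_Symbols"
begin

text \<open>A hypergraph of size N is represented by the list of its N edges (in order of
creation); each edge is the strictly increasing list of the indices of its vertices
(vertex v_i is represented by i).\<close>

type_synonym hgraph = "nat list list"

definition rrh_step :: "real \<Rightarrow> hgraph \<Rightarrow> hgraph pmf" where
  "rrh_step r H =
     bind_pmf (pmf_of_set {..<length H}) (\<lambda>i.
       (let e = H ! i; v = Suc (length H) in
        if e = [1] then return_pmf (H @ [[1, v]])
        else bind_pmf (bernoulli_pmf r) (\<lambda>redirect.
               return_pmf (H @ [if redirect then butlast e @ [v] else e @ [v]]))))"

text \<open>rrh_aux r n is the hypergraph of size n+1.\<close>
primrec rrh_aux :: "real \<Rightarrow> nat \<Rightarrow> hgraph pmf" where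
  "rrh_aux r 0 = return_pmf [[1]]"
| "rrh_aux r (Suc n) = bind_pmf (rrh_aux r n) (rrh_step r)"

text \<open>The RRH of size N (meaningful for N \<ge> 1).\<close>
definition rrh :: "real \<Rightarrow> nat \<Rightarrow> hgraph pmf" where
  "rrh r N = rrh_aux r (N - 1)"

definition num_edges :: "nat \<Rightarrow> hgraph \<Rightarrow> nat" where
  "num_edges k H = length (filter (\<lambda>e. length e = k) H)"

definition expected_R :: "real \<Rightarrow> nat \<Rightarrow> nat \<Rightarrow> real" where
  "expected_R r k N = measure_pmf.expectation (rrh r N) (\<lambda>H. real (num_edges k H))"

end

theory Submission
  imports Defs "HOL-Real_Asymp.Real_Asymp"
begin

text \<open>Let \<open>R\<^sub>N\<close> be the number of edges of size 2 in the hypergraph of size \<open>N\<close>. The chosen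
  edge is \<open>{v\<^sub>1}\<close> with probability \<open>1/N\<close>, which always creates a new edge of size 2, and it
  is an edge of size 2 with probability \<open>R\<^sub>N/N\<close>, which creates one exactly when redirecting,
  i.e. with probability \<open>r\<close>; every other choice creates an edge of size at least 3. Hence
  \<open>\<bbbE> R\<^sub>N\<^sub>+\<^sub>1 = (1 + r/N) \<bbbE> R\<^sub>N + 1/N\<close> with \<open>R\<^sub>1 = 0\<close>, a linear recurrence solved by
  \<open>(\<Gamma>(N+r)/(\<Gamma>(1+r)\<Gamma>(N)) - 1)/r\<close> thanks to \<open>\<Gamma>(x+1) = x\<Gamma>(x)\<close>. The asymptotics follow from
  \<open>\<Gamma>(N+r)/\<Gamma>(N) \<sim> N\<^sup>r\<close>, a consequence of Gauss's product formula for \<open>\<Gamma>\<close>.\<close>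

lemma expectation_bind_pmf_finite:
  fixes h :: "'b \<Rightarrow> real"
  assumes "finite (set_pmf p)" "\<And>x. x \<in> set_pmf p \<Longrightarrow> finite (set_pmf (f x))"
  shows "measure_pmf.expectation (p \<bind> f) h =
           measure_pmf.expectation p (\<lambda>x. measure_pmf.expectation (f x) h)"
  using assms
  by (simp add: pmf_expectation_bind[of "set_pmf p"] integral_measure_pmf[of "set_pmf p"])

lemma sum_list_map_of_bool: "(\<Sum>x\<leftarrow>xs. of_bool (P x)) = (of_nat (length (filter P xs)) :: 'a::semiring_1)"
  by (induction xs) auto

definition rrh_wellformed :: "hgraph \<Rightarrow> bool" where
  "rrh_wellformed H \<longleftrightarrow>
     length (filter (\<lambda>e. e = [1]) H) = 1 \<and> (\<forall>e\<in>set H. e = [1] \<or> 2 \<le> length e)"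

definition rrh_extend :: "real \<Rightarrow> hgraph \<Rightarrow> nat list \<Rightarrow> hgraph pmf" where
  "rrh_extend r H e = (let v = Suc (length H) in
     if e = [1] then return_pmf (H @ [[1, v]])
     else map_pmf (\<lambda>redirect. H @ [if redirect then butlast e @ [v] else e @ [v]])
            (bernoulli_pmf r))"

lemma rrh_step_eq: "rrh_step r H = pmf_of_set {..<length H} \<bind> (\<lambda>i. rrh_extend r H (H ! i))"
  unfolding rrh_step_def rrh_extend_def map_pmf_def Let_def ..

lemma set_pmf_rrh_step:
  assumes "H \<noteq> []"
  shows "set_pmf (rrh_step r H) = (\<Union>i<length H. set_pmf (rrh_extend r H (H ! i)))"
proof -
  have "set_pmf (pmf_of_set {..<length H}) = {..<length H}"
    using assms by (intro set_pmf_of_set) (auto simp: lessThan_empty_iff)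
  then show ?thesis by (simp add: rrh_step_eq)
qed

lemma finite_set_pmf_rrh_extend: "finite (set_pmf (rrh_extend r H e))"
  by (auto simp: rrh_extend_def Let_def)

lemma rrh_extend_wellformed:
  assumes "rrh_wellformed H" "e \<in> set H" "H' \<in> set_pmf (rrh_extend r H e)"
  shows "length H' = Suc (length H) \<and> rrh_wellformed H'"
proof (cases "e = [1]")
  case True
  then show ?thesis using assms by (auto simp: rrh_wellformed_def rrh_extend_def)
next
  case False
  with assms have "2 \<le> length e" by (auto simp: rrh_wellformed_def)
  moreover obtain b where "H' = H @ [if b then butlast e @ [Suc (length H)] else e @ [Suc (length H)]]"
    using assms(3) False by (auto simp: rrh_extend_def Let_def)
  ultimately show ?thesis using assms(1) by (cases b) (auto simp: rrh_wellformed_def)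
qed

lemma rrh_aux_wellformed:
  "H \<in> set_pmf (rrh_aux r n) \<Longrightarrow> length H = Suc n \<and> rrh_wellformed H"
proof (induction n arbitrary: H)
  case 0
  then show ?case by (simp add: rrh_wellformed_def)
next
  case (Suc n)
  then obtain H0 where H0: "H0 \<in> set_pmf (rrh_aux r n)" "H \<in> set_pmf (rrh_step r H0)"
    by auto
  with Suc.IH have "length H0 = Suc n" "rrh_wellformed H0" by auto
  moreover obtain i where "i < length H0" "H \<in> set_pmf (rrh_extend r H0 (H0 ! i))"
    using H0(2) set_pmf_rrh_step[of H0 r] \<open>length H0 = Suc n\<close> by fastforce
  ultimately show ?case using rrh_extend_wellformed[of H0 "H0 ! i" H r] by auto
qed

lemma finite_set_pmf_rrh_step: "H \<noteq> [] \<Longrightarrow> finite (set_pmf (rrh_step r H))"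
  by (simp add: set_pmf_rrh_step finite_set_pmf_rrh_extend)

lemma finite_set_pmf_rrh_aux: "finite (set_pmf (rrh_aux r n))"
proof (induction n)
  case (Suc n)
  have "finite (set_pmf (rrh_step r H))" if "H \<in> set_pmf (rrh_aux r n)" for H
  proof (rule finite_set_pmf_rrh_step)
    show "H \<noteq> []" using rrh_aux_wellformed[OF that] by auto
  qed
  with Suc show ?case by simp
qed simp

lemma expectation_rrh_extend:
  assumes "0 \<le> r" "r \<le> 1" "e = [1] \<or> 2 \<le> length e"
  shows "measure_pmf.expectation (rrh_extend r H e) (\<lambda>H. real (num_edges 2 H))
           = real (num_edges 2 H) + of_bool (e = [1]) + r * of_bool (length e = 2)"
  using assms
  by (auto simp: rrh_extend_def num_edges_def algebra_simps)

lemma expectation_rrh_step: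
  assumes "rrh_wellformed H" "H \<noteq> []" "0 \<le> r" "r \<le> 1"
  shows "measure_pmf.expectation (rrh_step r H) (\<lambda>H. real (num_edges 2 H))
           = real (num_edges 2 H) + (1 + r * real (num_edges 2 H)) / real (length H)"
proof -
  have "{..<length H} \<noteq> {}" using assms(2) by (simp add: lessThan_empty_iff)
  define inc where "inc e = of_bool (e = [1]) + r * of_bool (length e = 2)" for e :: "nat list"
  have "(\<Sum>i<length H. inc (H ! i)) = (\<Sum>e\<leftarrow>H. inc e)"
    by (simp add: sum_list_sum_nth lessThan_atLeast0)
  also have "\<dots> = 1 + r * real (num_edges 2 H)"
    using assms(1)
    by (simp add: inc_def sum_list_addf sum_list_const_mult sum_list_map_of_bool
        num_edges_def rrh_wellformed_def)
  finally have sum_inc: "(\<Sum>i<length H. inc (H ! i)) = 1 + r * real (num_edges 2 H)" .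
  have "measure_pmf.expectation (rrh_step r H) (\<lambda>H. real (num_edges 2 H))
          = (\<Sum>i<length H. (real (num_edges 2 H) + inc (H ! i)) / real (length H))"
    using assms \<open>{..<length H} \<noteq> {}\<close>
    by (auto simp: rrh_step_eq pmf_expectation_bind_pmf_of_set finite_set_pmf_rrh_extend
        expectation_rrh_extend rrh_wellformed_def inc_def add.assoc divide_inverse mult.commute
        intro!: sum.cong)
  also have "\<dots> = (\<Sum>i<length H. real (num_edges 2 H) + inc (H ! i)) / real (length H)"
    by (simp add: sum_divide_distrib)
  finally show ?thesis
    using sum_inc assms(2) by (simp add: sum.distrib field_simps)
qed

lemma expected_R_2_Suc:
  assumes "0 \<le> r" "r \<le> 1" "1 \<le> N"
  shows "expected_R r 2 (Suc N) = expected_R r 2 N * (1 + r / real N) + 1 / real N"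
proof -
  obtain n where N: "N = Suc n" using assms(3) by (cases N) auto
  let ?R = "\<lambda>H. real (num_edges 2 H)"
  have "expected_R r 2 (Suc N)
          = measure_pmf.expectation (rrh_aux r n) (\<lambda>H. measure_pmf.expectation (rrh_step r H) ?R)"
    unfolding expected_R_def rrh_def N using rrh_aux_wellformed
    by (fastforce intro: expectation_bind_pmf_finite finite_set_pmf_rrh_aux finite_set_pmf_rrh_step)
  also have "\<dots> = measure_pmf.expectation (rrh_aux r n) (\<lambda>H. ?R H * (1 + r / real N) + 1 / real N)"
  proof (intro integral_cong_AE AE_pmfI)
    fix H assume "H \<in> set_pmf (rrh_aux r n)"
    then have "length H = N" "rrh_wellformed H" "H \<noteq> []"
      using rrh_aux_wellformed[of H r n] N by auto
    then show "measure_pmf.expectation (rrh_step r H) ?R = ?R H * (1 + r / real N) + 1 / real N"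
      using expectation_rrh_step[of H r] assms by (simp add: field_simps)
  qed simp_all
  also have "\<dots> = expected_R r 2 N * (1 + r / real N) + 1 / real N"
    by (simp add: expected_R_def rrh_def N integrable_measure_pmf_finite finite_set_pmf_rrh_aux)
  finally show ?thesis .
qed

lemma Gamma_quotient_recurrence:
  fixes r x :: real
  assumes "0 < r" "0 < x"
  shows "(1 / r) * (Gamma (x + 1 + r) / (Gamma (1 + r) * Gamma (x + 1)) - 1)
           = (1 / r) * (Gamma (x + r) / (Gamma (1 + r) * Gamma x) - 1) * (1 + r / x) + 1 / x"
proof -
  have not_nonpos_Int: "y \<notin> \<int>\<^sub>\<le>\<^sub>0" if "0 < y" for y :: real
    using that nonpos_Ints_nonpos by fastforce
  have "Gamma (x + 1 + r) = (x + r) * Gamma (x + r)" "Gamma (x + 1) = x * Gamma x"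
    using Gamma_plus1[OF not_nonpos_Int, of "x + r"] Gamma_plus1[OF not_nonpos_Int, of x] assms
    by (simp_all add: add_ac)
  moreover have "Gamma (1 + r) \<noteq> 0" "Gamma x \<noteq> 0"
    using Gamma_real_pos[of "1 + r"] Gamma_real_pos[of x] assms by (auto simp del: Gamma_real_pos)
  ultimately show ?thesis using assms by (simp add: field_simps)
qed

lemma expected_R_2_closed_form:
  assumes "0 < r" "r \<le> 1" "1 \<le> N"
  shows "expected_R r 2 N = (1 / r) * (Gamma (real N + r) / (Gamma (1 + r) * Gamma (real N)) - 1)"
  using assms(3)
proof (induction N rule: dec_induct)
  case base
  have "Gamma (1 + r) > 0" using assms(1) by simp
  then show ?case by (simp add: expected_R_def rrh_def num_edges_def add.commute)
next
  case (step N)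
  then show ?case
    using expected_R_2_Suc[of r N] Gamma_quotient_recurrence[of r "real N"] assms
    by (simp add: add_ac)
qed

lemma Gamma_quotient_asymp_equiv:
  fixes r :: real
  assumes "r \<notin> \<int>\<^sub>\<le>\<^sub>0"
  shows "(\<lambda>N::nat. Gamma (real N + r) / Gamma (real N)) \<sim>[at_top] (\<lambda>N. real N powr r)"
proof (rule asymp_equivI')
  have Gamma_r: "Gamma r \<noteq> 0" using assms by (simp add: Gamma_eq_zero_iff)
  have "eventually (\<lambda>N. Gamma r / Gamma_series' r N
          = Gamma (real N + r) / Gamma (real N) / real N powr r) at_top"
    using eventually_gt_at_top[of 0]
  proof eventually_elim
    case (elim N)
    have "fact (N - 1) = Gamma (real N)"
      using Gamma_fact[of "N - 1", where 'a=real] elim by (simp add: of_nat_diff)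
    moreover have "pochhammer r N = Gamma (r + real N) / Gamma r"
      using pochhammer_Gamma[OF assms] by simp
    moreover have "exp (r * ln (real N)) = real N powr r" using elim by (simp add: powr_def)
    moreover have "Gamma (real N) > 0" "real N powr r > 0" using elim by auto
    ultimately show ?case using Gamma_r by (simp add: Gamma_series'_def field_simps add.commute)
  qed
  moreover have "(\<lambda>N. Gamma r / Gamma_series' r N) \<longlonglongrightarrow> Gamma r / Gamma r"
    by (intro tendsto_divide tendsto_const Gamma_series'_LIMSEQ Gamma_r)
  ultimately show "(\<lambda>N. Gamma (real N + r) / Gamma (real N) / real N powr r) \<longlonglongrightarrow> 1"
    using Gamma_r tendsto_cong by fastforce
qed

lemma expected_R_2_asymp_equiv:
  assumes "0 < r" "r \<le> 1"
  shows "(\<lambda>N. expected_R r 2 N) \<sim>[at_top] (\<lambda>N. real N powr r / (r * Gamma (1 + r)))"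
proof -
  define c where "c = r * Gamma (1 + r)"
  have "c > 0" using assms by (simp add: c_def)
  have quotient: "(\<lambda>N::nat. Gamma (real N + r) / Gamma (real N) / c) \<sim>[at_top] (\<lambda>N. real N powr r / c)"
    using assms by (intro asymp_equiv_intros Gamma_quotient_asymp_equiv) (auto dest: nonpos_Ints_nonpos)
  have constant_negligible: "(\<lambda>N::nat. - 1 / r) \<in> o(\<lambda>N. real N powr r / c)"
    using assms \<open>c > 0\<close> by (simp add: landau_o.small.cdiv) real_asymp
  have "(\<lambda>N::nat. Gamma (real N + r) / Gamma (real N) / c + - 1 / r)
          \<sim>[at_top] (\<lambda>N. real N powr r / c)"
    by (rule asymp_equiv_add_right[OF constant_negligible, THEN iffD2, OF quotient])
  moreover have "eventually (\<lambda>N. Gamma (real N + r) / Gamma (real N) / c + - 1 / r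
                                = expected_R r 2 N) at_top"
    using eventually_ge_at_top[of 1]
  proof eventually_elim
    case (elim N)
    have "Gamma (real N) > 0" using elim by simp
    then show ?case using assms elim by (simp add: expected_R_2_closed_form c_def field_simps)
  qed
  ultimately show ?thesis unfolding c_def by (rule asymp_equiv_transfer) simp
qed

theorem mainTheorem15:
  fixes r :: real
  assumes "0 < r" and "r < 1"
  shows "(\<forall>N::nat. N \<ge> 1 \<longrightarrow>
           expected_R r 2 N =
             (1 / r) * (Gamma (real N + r) / (Gamma (1 + r) * Gamma (real N)) - 1))
       \<and> (\<lambda>N::nat. expected_R r 2 N) \<sim>[at_top] (\<lambda>N. real N powr r / (r * Gamma (1 + r)))"
  using expected_R_2_closed_form[of r] expected_R_2_asymp_equiv[of r] assms by auto

end
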